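(* Let $q \in \mathbb{R}^d$ and let $\mathcal{Q} = \lbrace i : q[i] \neq 0 \rbrace \subset \lbrace 1,\ldots,d\rbrace$. Let $\lbrace z_1,\ldots,z_m\rbrace \subset \mathbb{R}^d$ be a set of orthonormal vectors, and let $\mathcal{Z}_j = \lbrace i : z_j[i] \neq 0 \rbrace$ for $j = 1,\ldots,m$. Let $u$ be the output of twice-iterated classical Gram-Schmidt applied to $q$ over $\lbrace z_1,\ldots,z_m\rbrace$, i.e. $t_0 = q$, $t_{j+1} = t_j - \sum_{l=1}^m (t_j' z_l) z_l$ for $j = 0,1$, and $u = t_2$ (in exact arithmetic). Then $$\mathcal{U} := \lbrace i : u[i] \neq 0\rbrace \subset \Big(\bigcup_{j \in \mathfrak{Q}} \mathcal{Z}_j\Big) \cup \mathcal{Q}, \qquad \text{where } \mathfrak{Q} = \lbrace j : \mathcal{Q} \cap \mathcal{Z}_j \neq \emptyset \rbrace \subset \lbrace 1,\ldots,m\rbrace.$$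
   Context: For a vector $z \in \mathbb{R}^d$, $z[i]$ denotes its $i$-th component; $'$ denotes transpose. *)

theory Defs
  imports "HOL-Analysis.Analysis"
begin

definition vsupp :: "real ^ 'd \<Rightarrow> 'd set" where
  "vsupp v = {i. v $ i \<noteq> 0}"

definition cgs_step :: "(nat \<Rightarrow> real ^ 'd) \<Rightarrow> nat \<Rightarrow> real ^ 'd \<Rightarrow> real ^ 'd" where
  "cgs_step z m t = t - (\<Sum>l = 1..m. (t \<bullet> z l) *\<^sub>R z l)"

end

theory Submission
  imports Defs
begin

(* For orthonormal z the first classical Gram-Schmidt step already makes q orthogonal to every
   z l, so the second step is the identity. The first step q - sum (q' z l) z l can be nonzero at
   i only if q[i] is, or z l[i] is for some l with q' z l nonzero, and the latter forces the
   supports of q and z l to meet. *)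

lemma vsupp_inter_nonempty_if_inner_nonzero:
  fixes x y :: "real ^ 'd"
  assumes "x \<bullet> y \<noteq> 0"
  shows "vsupp x \<inter> vsupp y \<noteq> {}"
proof -
  from assms have "(\<Sum>k\<in>UNIV. x $ k * y $ k) \<noteq> 0" by (simp add: inner_vec_def)
  then obtain k where "x $ k * y $ k \<noteq> 0" by (meson sum.neutral)
  thus ?thesis by (auto simp: vsupp_def)
qed

lemma inner_cgs_step_orthonormal:
  fixes t :: "real ^ 'd" and z :: "nat \<Rightarrow> real ^ 'd"
  assumes orthonormal: "\<And>j l. j \<in> {1..m} \<Longrightarrow> l \<in> {1..m} \<Longrightarrow>
             z j \<bullet> z l = (if j = l then 1 else 0)"
    and l: "l \<in> {1..m}"
  shows "cgs_step z m t \<bullet> z l = 0"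
proof -
  have "(\<Sum>k = 1..m. (t \<bullet> z k) *\<^sub>R z k) \<bullet> z l = (\<Sum>k = 1..m. (t \<bullet> z k) * (z k \<bullet> z l))"
    by (simp add: inner_sum_left)
  also have "\<dots> = (\<Sum>k = 1..m. if k = l then t \<bullet> z k else 0)"
    by (rule sum.cong) (use l in \<open>auto simp: orthonormal\<close>)
  also have "\<dots> = t \<bullet> z l"
    using l by (simp add: sum.delta')
  finally show ?thesis
    unfolding cgs_step_def by (simp add: inner_diff_left)
qed

lemma cgs_step_orthogonal_eq:
  assumes "\<And>l. l \<in> {1..m} \<Longrightarrow> t \<bullet> z l = 0"
  shows "cgs_step z m t = t"
  using assms by (simp add: cgs_step_def)

lemma cgs_step_idem:
  assumes "\<And>j l. j \<in> {1..m} \<Longrightarrow> l \<in> {1..m} \<Longrightarrow> z j \<bullet> z l = (if j = l then 1 else 0)"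
  shows "cgs_step z m (cgs_step z m t) = cgs_step z m t"
  by (rule cgs_step_orthogonal_eq) (rule inner_cgs_step_orthonormal[OF assms])

lemma vsupp_cgs_step_subset:
  "vsupp (cgs_step z m q) \<subseteq>
     (\<Union>j \<in> {j \<in> {1..m}. vsupp q \<inter> vsupp (z j) \<noteq> {}}. vsupp (z j)) \<union> vsupp q"
proof
  fix i assume "i \<in> vsupp (cgs_step z m q)"
  hence ne: "q $ i - (\<Sum>l = 1..m. (q \<bullet> z l) * z l $ i) \<noteq> 0"
    by (simp add: vsupp_def cgs_step_def sum_component)
  show "i \<in> (\<Union>j \<in> {j \<in> {1..m}. vsupp q \<inter> vsupp (z j) \<noteq> {}}. vsupp (z j)) \<union> vsupp q"
  proof (cases "q $ i = 0")
    case False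
    thus ?thesis by (simp add: vsupp_def)
  next
    case True
    with ne have "(\<Sum>l = 1..m. (q \<bullet> z l) * z l $ i) \<noteq> 0" by simp
    then obtain l where l: "l \<in> {1..m}" and term_ne: "(q \<bullet> z l) * z l $ i \<noteq> 0"
      by (meson sum.neutral)
    have "vsupp q \<inter> vsupp (z l) \<noteq> {}"
      using term_ne by (intro vsupp_inter_nonempty_if_inner_nonzero) simp
    moreover have "i \<in> vsupp (z l)"
      using term_ne by (simp add: vsupp_def)
    ultimately show ?thesis using l by blast
  qed
qed

theorem mainTheorem1:
  fixes q :: "real ^ 'd" and z :: "nat \<Rightarrow> real ^ 'd" and m :: nat
  assumes orthonormal: "\<And>j l. j \<in> {1..m} \<Longrightarrow> l \<in> {1..m} \<Longrightarrow>
             z j \<bullet> z l = (if j = l then 1 else 0)"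
  shows "vsupp (cgs_step z m (cgs_step z m q)) \<subseteq>
           (\<Union>j \<in> {j \<in> {1..m}. vsupp q \<inter> vsupp (z j) \<noteq> {}}. vsupp (z j)) \<union> vsupp q"
  using vsupp_cgs_step_subset[of z m q] by (simp only: cgs_step_idem[OF orthonormal])

end
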